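(* Let $k\ge 3$ and consider $k$ processes $P_0,\dots,P_{k-1}$ (with distinct ids $0,\dots,k-1$) with inputs $v_0,\dots,v_{k-1}$, running the following algorithm on a single shared $\text{WRN}_{k}$ object: process $P_i$ performs $t\gets\texttt{WRN}(i,v_i)$ and then decides $t$ if $t\neq\bot$, and decides $v_i$ otherwise. This algorithm solves the $(k-1)$-set consensus task for these $k$ processes (wait-free).
   Context: A $\text{WRN}_{k}$ (Write and Read Next) object is a deterministic atomic shared object with a single operation $\texttt{WRN}(i,v)$, where $i\in\{0,\dots,k-1\}$ and $v\neq\bot$. Its state consists of $k$ values $A[0],\dots,A[k-1]$, initially all $\bot$; the operation $\texttt{WRN}(i,v)$ atomically sets $A[i]\gets v$ and returns $A[(i+1)\bmod k]$. Model: asynchronous shared memory; processes may crash. The $m$-set consensus task: each process has an input and every non-faulty process must output, within a finite number of its own steps, a value such that every output is the input of some process and there are at most $m$ different output values. *)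

theory Defs
  imports Main
begin

text \<open>State of a WRN_k object: k cells A[0..k-1]; None represents bot.\<close>
type_synonym 'a wrn_state = "nat \<Rightarrow> 'a option"

definition wrn :: "nat \<Rightarrow> 'a wrn_state \<Rightarrow> nat \<Rightarrow> 'a \<Rightarrow> 'a wrn_state \<times> 'a option" where
  "wrn k A i v = (A(i := Some v), A ((i + 1) mod k))"

text \<open>One step of process P_i of the algorithm: t <- WRN(i, v_i); decide t if t is not bot,
  else decide v_i. Configuration = (object state, decisions; None = not yet decided).\<close>
definition alg_step :: "nat \<Rightarrow> (nat \<Rightarrow> 'a) \<Rightarrow> 'a wrn_state \<times> (nat \<Rightarrow> 'a option) \<Rightarrow> nat
    \<Rightarrow> 'a wrn_state \<times> (nat \<Rightarrow> 'a option)" where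
  "alg_step k v c i =
     (let (A', t) = wrn k (fst c) i (v i)
      in (A', (snd c)(i := Some (case t of Some x \<Rightarrow> x | None \<Rightarrow> v i))))"

text \<open>An execution is given by a schedule: the list of processes in the order in which they
  perform their (single, atomic) step. Each process takes at most one step (distinct list);
  processes not in the schedule have crashed before taking a step.\<close>
definition alg_run :: "nat \<Rightarrow> (nat \<Rightarrow> 'a) \<Rightarrow> nat list \<Rightarrow> 'a wrn_state \<times> (nat \<Rightarrow> 'a option)" where
  "alg_run k v sched = fold (\<lambda>i c. alg_step k v c i) sched (\<lambda>_. None, \<lambda>_. None)"

definition decisions :: "nat \<Rightarrow> (nat \<Rightarrow> 'a) \<Rightarrow> nat list \<Rightarrow> nat \<Rightarrow> 'a option" where
  "decisions k v sched = snd (alg_run k v sched)"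

end

theory Submission
  imports Defs
begin

text \<open>Each process writes its input into its own cell and reads its successor's cell, so a process
  decides either its own input or its successor's. If some process crashes, at most k - 1
  processes decide at all. Otherwise the first process j to move finds its successor's cell
  empty and decides its own input, and its predecessor, which moves later, reads j's input from
  cell j: two processes agree, so again at most k - 1 values are decided.\<close>

lemma alg_run_snoc: "alg_run k v (xs @ [i]) = alg_step k v (alg_run k v xs) i"
  by (simp add: alg_run_def)

lemma fst_alg_run: "fst (alg_run k v xs) = (\<lambda>j. if j \<in> set xs then Some (v j) else None)"
  by (induction xs rule: rev_induct)
     (auto simp: alg_run_def alg_step_def wrn_def split: prod.splits)

lemma decisions_Nil: "decisions k v [] = (\<lambda>_. None)"
  by (simp add: decisions_def alg_run_def)

lemma decisions_snoc:
  "decisions k v (xs @ [i]) = (decisions k v xs)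
     (i := Some (if (i + 1) mod k \<in> set xs then v ((i + 1) mod k) else v i))"
  by (simp add: decisions_def alg_run_snoc alg_step_def wrn_def fst_alg_run split: prod.splits)

lemma decisions_eq_None_iff: "decisions k v xs i = None \<longleftrightarrow> i \<notin> set xs"
  by (induction xs rule: rev_induct) (simp_all add: decisions_Nil decisions_snoc)

lemma decisions_eq_SomeD:
  "decisions k v xs i = Some d \<Longrightarrow> d = v i \<or> d = v ((i + 1) mod k)"
  by (induction xs rule: rev_induct) (auto simp: decisions_Nil decisions_snoc split: if_splits)

lemma decisions_append_notin:
  "i \<notin> set zs \<Longrightarrow> decisions k v (ys @ zs) i = decisions k v ys i"
proof (induction zs rule: rev_induct)
  case (snoc z zs)
  then show ?case using decisions_snoc[of k v "ys @ zs" z] by simp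
qed simp

lemma decisions_of_step:
  assumes "i \<notin> set zs"
  shows "decisions k v (ys @ i # zs) i
           = Some (if (i + 1) mod k \<in> set ys then v ((i + 1) mod k) else v i)"
  using decisions_append_notin[OF assms, of k v "ys @ [i]"] by (simp add: decisions_snoc)

lemma decided_values_eq_image:
  "{d. \<exists>i. decisions k v xs i = Some d} = (\<lambda>i. the (decisions k v xs i)) ` set xs"
proof (intro equalityI subsetI)
  fix d assume "d \<in> {d. \<exists>i. decisions k v xs i = Some d}"
  then obtain i where i: "decisions k v xs i = Some d" by blast
  then have "i \<in> set xs" using decisions_eq_None_iff[of k v xs i] by auto
  with i show "d \<in> (\<lambda>i. the (decisions k v xs i)) ` set xs" by force
next
  fix d assume "d \<in> (\<lambda>i. the (decisions k v xs i)) ` set xs"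
  then show "d \<in> {d. \<exists>i. decisions k v xs i = Some d}"
    using decisions_eq_None_iff[of k v xs] by force
qed

lemma first_and_predecessor_decide_alike:
  assumes "distinct (j # rest)" and "p \<in> set rest" and "(p + 1) mod k = j"
  shows "decisions k v (j # rest) p = decisions k v (j # rest) j"
proof -
  obtain ys zs where rest: "rest = ys @ p # zs"
    using assms(2) by (meson split_list)
  have "decisions k v (j # rest) p = Some (v j)"
    using decisions_of_step[of p zs k v "j # ys"] assms unfolding rest by auto
  moreover have "decisions k v (j # rest) j = Some (v j)"
    using decisions_of_step[of j rest k v "[]"] assms(1) by simp
  ultimately show ?thesis by simp
qed

lemma card_image_le_pred_if_collision:
  assumes "finite A" and "a \<in> A" and "b \<in> A" and "a \<noteq> b" and "g a = g b"
  shows "card (g ` A) \<le> card A - 1"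
proof -
  have "g ` A = g ` (A - {a})" using assms(2-5) by auto
  also have "card \<dots> \<le> card (A - {a})" by (rule card_image_le) (simp add: assms(1))
  finally show ?thesis using assms(1,2) by simp
qed

lemma card_decided_values_le:
  assumes "k \<ge> 2" and "distinct sched" and "set sched \<subseteq> {..<k}"
  shows "card {d. \<exists>i. decisions k v sched i = Some d} \<le> k - 1"
proof -
  let ?g = "\<lambda>i. the (decisions k v sched i)"
  have "card (?g ` set sched) \<le> k - 1"
  proof (cases "set sched = {..<k}")
    case False
    then have "card (set sched) < k"
      using assms(3) by (metis card_lessThan finite_lessThan psubset_card_mono psubsetI)
    then show ?thesis using card_image_le[of "set sched" ?g] by simp
  next
    case full: True
    then obtain j rest where sched: "sched = j # rest"
      using assms(1) by (cases sched) (auto simp: set_eq_iff dest: spec[of _ 0])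
    define p where "p = (if j = 0 then k - 1 else j - 1)"
    have "j < k" using full sched by auto
    then have "p < k" "p \<noteq> j" "(p + 1) mod k = j"
      using assms(1) by (auto simp: p_def)
    then have "p \<in> set rest" using full sched by auto
    then have "?g p = ?g j"
      using first_and_predecessor_decide_alike[of j rest p k v] \<open>(p + 1) mod k = j\<close> assms(2)
      unfolding sched by simp
    moreover have "p \<in> set sched" "j \<in> set sched" using \<open>p \<in> set rest\<close> sched by auto
    ultimately have "card (?g ` set sched) \<le> card (set sched) - 1"
      using card_image_le_pred_if_collision[of "set sched" p j ?g] \<open>p \<noteq> j\<close> by simp
    then show ?thesis using full by simp
  qed
  then show ?thesis by (simp add: decided_values_eq_image)
qed

theorem corollary9:
  fixes k :: nat and v :: "nat \<Rightarrow> 'a" and sched :: "nat list"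
  assumes "k \<ge> 3"
    and "distinct sched"
    and "set sched \<subseteq> {..<k}"
  shows "(\<forall>i \<in> set sched. decisions k v sched i \<noteq> None)
       \<and> (\<forall>i d. decisions k v sched i = Some d \<longrightarrow> d \<in> v ` {..<k})
       \<and> finite {d. \<exists>i. decisions k v sched i = Some d}
       \<and> card {d. \<exists>i. decisions k v sched i = Some d} \<le> k - 1"
proof -
  have validity: "d \<in> v ` {..<k}" if "decisions k v sched i = Some d" for i d
  proof -
    have "i < k" using that assms(3) decisions_eq_None_iff[of k v sched i] by auto
    moreover have "(i + 1) mod k < k" using assms(1) by simp
    ultimately show ?thesis using decisions_eq_SomeD[OF that] by blast
  qed
  show ?thesis
    using decisions_eq_None_iff[of k v sched] validity decided_values_eq_image[of k v sched]
      card_decided_values_le[of k sched v] assms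
    by auto
qed

end
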